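(* Let $a,b\in GF(q)\setminus\{0\}$ and let $\mu\in GF(q)$ satisfy $\mu^2=\frac ba\neq1$. Let $\mathcal B^1_{(s,c)}\in\tau(a,b)$ and let $P$ be the point of $\mathcal B_a\cap\mathcal B^1_{(s,c)}$. Then the unique point of $\mathcal B_b\cap\mathcal B^1_{(s,c)}$ is either $\mu P$ or $-\mu P$.
   Context: Let $p$ be an odd prime, $m\ge1$, and $q=p^m$. $GF(q^2)$ denotes the quadratic extension of $GF(q)$, and for $z\in GF(q^2)$ we write $\bar z:=z^{q}$. The Miquelian Möbius plane $\mathbb M(q)$ has point set $GF(q^2)\cup\{\infty\}$ and circles of two types: for $s\in GF(q^2)$ and $c\in GF(q)\setminus\{0\}$, the circle of the first type $\mathcal B^1_{(s,c)}=\{z\in GF(q^2):(z-s)(\bar z-\bar s)=c\}$; for $s\in GF(q^2)\setminus\{0\}$ and $c\in GF(q)$, the circle of the second type $\mathcal B^2_{(s,c)}=\{z\in GF(q^2):\bar s z+s\bar z=c\}\cup\{\infty\}$. Two circles are called tangential if they have exactly one point in common. For $a\in GF(q)\setminus\{0\}$ put $\mathcal B_a:=\mathcal B^1_{(0,a)}$, and for $a,b\in GF(q)\setminus\{0\}$ let $\tau(a,b)$ be the set of circles tangential to both $\mathcal B_a$ and $\mathcal B_b$. *)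

theory Defs
  imports Main "HOL-Computational_Algebra.Primes"
begin

text \<open>GF(q^2) is modelled as a finite field type 'a with CARD('a) = q^2;
 conjugation is z^q, and GF(q) is the subfield of elements fixed by it.
 Points of the Moebius plane are 'a option, with None playing the role of infinity.\<close>

definition cnj :: "nat \<Rightarrow> 'a::field \<Rightarrow> 'a" where
  "cnj q z = z ^ q"

definition subF :: "nat \<Rightarrow> 'a::field set" where
  "subF q = {x. x ^ q = x}"

definition circle1 :: "nat \<Rightarrow> 'a::field \<Rightarrow> 'a \<Rightarrow> 'a option set" where
  "circle1 q s c = Some ` {z. (z - s) * (cnj q z - cnj q s) = c}"

definition circle2 :: "nat \<Rightarrow> 'a::field \<Rightarrow> 'a \<Rightarrow> 'a option set" where
  "circle2 q s c = insert None (Some ` {z. cnj q s * z + s * cnj q z = c})"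

definition is_circle :: "nat \<Rightarrow> 'a::field option set \<Rightarrow> bool" where
  "is_circle q C \<longleftrightarrow>
     (\<exists>s c. c \<in> subF q \<and> c \<noteq> 0 \<and> C = circle1 q s c) \<or>
     (\<exists>s c. s \<noteq> 0 \<and> c \<in> subF q \<and> C = circle2 q s c)"

definition tangential :: "'a set \<Rightarrow> 'a set \<Rightarrow> bool" where
  "tangential C D \<longleftrightarrow> (\<exists>!x. x \<in> C \<and> x \<in> D)"

definition Bcirc :: "nat \<Rightarrow> 'a::field \<Rightarrow> 'a option set" where
  "Bcirc q a = circle1 q 0 a"

definition tau :: "nat \<Rightarrow> 'a::field \<Rightarrow> 'a \<Rightarrow> 'a option set set" where
  "tau q a b = {C. is_circle q C \<and> tangential C (Bcirc q a) \<and> tangential C (Bcirc q b)}"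

end

theory Submission
  imports Defs
begin

text \<open>The line through 0 and s is the fixed locus of the reflection
  z \<mapsto> s z^q / s^q, which maps every first-type circle centred on that line
  onto itself. If the circle with centre s touches the concentric circles of
  radii a and b in single points P and Q, both points are therefore fixed by
  the reflection, so Q/P is fixed by conjugation, i.e. lies in GF(q).
  Comparing norms then gives (Q/P)^2 = b/a = \<mu>^2.\<close>

lemma finite_field_power_card:
  fixes x :: "'a :: {finite,field}"
  shows "x ^ card (UNIV :: 'a set) = x"
proof (cases "x = 0")
  case False
  have "x * (\<Prod>y\<in>UNIV-{0}. x * y) = x * x ^ (card (UNIV :: 'a set) - 1) * \<Prod>(UNIV-{0})"
    by (simp add: prod.distrib mult_ac)
  also have "x * x ^ (card (UNIV :: 'a set) - 1) = x ^ card (UNIV :: 'a set)"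
    using finite_UNIV_card_ge_0[where ?'a = 'a] by (simp flip: power_Suc)
  also have "(\<Prod>y\<in>UNIV-{0}. x * y) = (\<Prod>y\<in>UNIV-{0}. y)"
    by (rule prod.reindex_bij_witness[of _ "\<lambda>y. y / x" "\<lambda>y. x * y"]) (use False in auto)
  finally show ?thesis
    by simp
qed (use finite_UNIV_card_ge_0[where ?'a = 'a] in auto)

lemma cnj_cnj:
  fixes z :: "'a :: {finite,field}"
  assumes "card (UNIV :: 'a set) = q ^ 2"
  shows "cnj q (cnj q z) = z"
  using finite_field_power_card[of z] assms
  by (simp add: cnj_def power2_eq_square flip: power_mult)

lemma cnj_eq_0_iff [simp]: "cnj q z = 0 \<longleftrightarrow> z = 0 \<and> q > 0"
  by (auto simp: cnj_def)

lemma cnj_mult: "cnj q (x * y) = cnj q x * cnj q y"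
  by (simp add: cnj_def power_mult_distrib)

lemma cnj_divide: "cnj q (x / y) = cnj q x / cnj q y"
  by (simp add: cnj_def power_divide)

lemma Some_in_circle1_iff:
  "Some z \<in> circle1 q s c \<longleftrightarrow> (z - s) * (cnj q z - cnj q s) = c"
  by (auto simp: circle1_def)

definition reflect :: "nat \<Rightarrow> 'a::field \<Rightarrow> 'a \<Rightarrow> 'a" where
  "reflect q s z = s * cnj q z / cnj q s"

lemma reflect_fixed_iff:
  assumes "s \<noteq> 0" "q > 0"
  shows "reflect q s z = z \<longleftrightarrow> s * cnj q z = cnj q s * z"
  using assms by (auto simp: reflect_def field_simps)

lemma circle1_reflect_closed:
  fixes s t z c :: "'a :: {finite,field}"
  assumes card: "card (UNIV :: 'a set) = q ^ 2" and "s \<noteq> 0" "q > 0"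
    and centre_on_line: "s * cnj q t = cnj q s * t"
    and "Some z \<in> circle1 q t c"
  shows "Some (reflect q s z) \<in> circle1 q t c"
proof -
  have cs: "cnj q s \<noteq> 0" using assms by simp
  have "reflect q s z - t = s * (cnj q z - cnj q t) / cnj q s"
    using centre_on_line cs by (simp add: reflect_def field_simps)
  moreover have "cnj q (reflect q s z) - cnj q t = cnj q s * (z - t) / s"
    using centre_on_line \<open>s \<noteq> 0\<close>
    by (simp add: reflect_def cnj_mult cnj_divide cnj_cnj[OF card] field_simps)
  ultimately have "(reflect q s z - t) * (cnj q (reflect q s z) - cnj q t)
      = (z - t) * (cnj q z - cnj q t)"
    using cs \<open>s \<noteq> 0\<close> by (simp only:) (simp add: field_simps)
  with assms(5) show ?thesis
    by (simp add: Some_in_circle1_iff)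
qed

lemma tangential_fixed_point:
  assumes "tangential C D" "x \<in> C" "x \<in> D"
    and "f ` C \<subseteq> C" "f ` D \<subseteq> D"
  shows "f x = x"
  using assms unfolding tangential_def by blast

lemma tangency_point_on_axis:
  fixes s z c a :: "'a :: {finite,field}"
  assumes card: "card (UNIV :: 'a set) = q ^ 2" and "s \<noteq> 0" "q > 0"
    and "tangential (circle1 q s c) (Bcirc q a)"
    and "Some z \<in> Bcirc q a \<inter> circle1 q s c"
  shows "s * cnj q z = cnj q s * z"
proof -
  let ?\<rho> = "map_option (reflect q s)"
  have "?\<rho> w \<in> circle1 q t d" if "w \<in> circle1 q t d" "s * cnj q t = cnj q s * t" for w t d
    using that circle1_reflect_closed[OF card \<open>s \<noteq> 0\<close> \<open>q > 0\<close>]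
    by (auto simp: circle1_def)
  then have "?\<rho> (Some z) = Some z"
    using assms(4,5) \<open>q > 0\<close> unfolding Bcirc_def
    by (intro tangential_fixed_point[of "circle1 q s c" "circle1 q 0 a"]) auto
  with assms(2,3) show ?thesis
    by (simp add: reflect_fixed_iff)
qed

lemma axis_points_ratio_cnj_fixed:
  assumes "s \<noteq> 0" "q > 0"
    and "s * cnj q z = cnj q s * z" "s * cnj q w = cnj q s * w"
  shows "cnj q (w / z) = w / z"
proof -
  have "cnj q z = cnj q s * z / s" "cnj q w = cnj q s * w / s"
    using assms by (simp_all add: field_simps)
  with assms(1,2) show ?thesis
    by (simp add: cnj_divide)
qed

lemma norm_scale_by_fixed:
  assumes "cnj q r = r"
  shows "r * z * cnj q (r * z) = r ^ 2 * (z * cnj q z)"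
  using assms by (simp add: cnj_mult power2_eq_square mult_ac)

theorem mainTheorem4:
  fixes p m q :: nat and a b \<mu> s c P :: "'a::{finite,field}"
  assumes "prime p" and "odd p" and "m \<ge> 1" and "q = p ^ m"
    and "card (UNIV :: 'a set) = q ^ 2"
    and "a \<in> subF q" "a \<noteq> 0" "b \<in> subF q" "b \<noteq> 0"
    and "\<mu> \<in> subF q" "\<mu> ^ 2 = b / a" "b / a \<noteq> 1"
    and "c \<in> subF q" "c \<noteq> 0"
    and "circle1 q s c \<in> tau q a b"
    and "Some P \<in> Bcirc q a \<inter> circle1 q s c"
  shows "\<forall>Q. Some Q \<in> Bcirc q b \<inter> circle1 q s c \<longrightarrow> Q = \<mu> * P \<or> Q = - (\<mu> * P)"
proof (intro allI impI)
  fix Q assume Q: "Some Q \<in> Bcirc q b \<inter> circle1 q s c"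
  have q: "q > 0" using assms(1,4) prime_gt_0_nat by simp
  have P_norm: "P * cnj q P = a" and Q_norm: "Q * cnj q Q = b"
    using assms(16) Q q by (auto simp: Bcirc_def Some_in_circle1_iff)
  have "s \<noteq> 0"
  proof
    assume "s = 0"
    then have "a = c" "b = c"
      using assms(16) Q q by (auto simp: Bcirc_def Some_in_circle1_iff)
    with assms(7,12) show False by simp
  qed
  have "P \<noteq> 0" using P_norm assms(7) by auto
  have "tangential (circle1 q s c) (Bcirc q a)" "tangential (circle1 q s c) (Bcirc q b)"
    using assms(15) by (auto simp: tau_def)
  then have "cnj q (Q / P) = Q / P"
    using tangency_point_on_axis[OF assms(5) \<open>s \<noteq> 0\<close> q] assms(16) Q
    by (intro axis_points_ratio_cnj_fixed[OF \<open>s \<noteq> 0\<close> q]) blast+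
  then have "(Q / P) ^ 2 * a = b"
    using norm_scale_by_fixed[of q "Q / P" P] P_norm Q_norm \<open>P \<noteq> 0\<close> by simp
  then have "(Q / P) ^ 2 = \<mu> ^ 2"
    using assms(7,11) by (auto simp: eq_divide_eq)
  then have "Q / P = \<mu> \<or> Q / P = - \<mu>"
    by (simp add: power2_eq_iff)
  then show "Q = \<mu> * P \<or> Q = - (\<mu> * P)"
    using \<open>P \<noteq> 0\<close> by (auto simp: divide_eq_eq)
qed

end
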